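(* The action of the automorphism group $\mathrm{Aut}(M_7)$ on the moduli space $\mathcal{R}_7$ (equivalently, by birational maps on the quartic surface $Z_7$) is faithful.
   Context: Over $\mathbb{C}$. $M_7$ is the rank-3 matroid on $E=\{1,\dots,7,1',\dots,7'\}$ in which every 3-subset is a basis except the triples $\{a,b,c'\}$ with $a\neq b\in\{1,\dots,7\}$, $a+b\equiv 2c\pmod 7$. $\mathrm{Aut}(M_7)$ is the group of permutations of $E$ mapping bases to bases; identifying $i'$ with $7+i$, it is generated by $(1,7,4,3,6,5,2)(8,14,11,10,13,12,9)$ and $(1,3,5,6,7,2)(8,10,12,13,14,9)$ and is isomorphic to the Frobenius group of order 42. A realization of $M_7$ is a labeled family of 14 distinct lines $(m_e)_{e\in E}$ in $\mathbb{P}^2$ such that three are concurrent iff their labels form a non-basis; $\mathcal{R}_7$ is the moduli space (a surface) of $\mathrm{PGL}_3$-orbits of realizations. $\sigma\in\mathrm{Aut}(M_7)$ acts on realizations by permuting the labels of the lines, which induces an action on $\mathcal{R}_7$. $\mathcal{R}_7$ is a dense open subset of the quartic $Z_7\subset\mathbb{P}^3$: $y_1^2y_2^2+y_1^2y_2y_3-y_1y_2^2y_3-y_1y_2y_3^2-y_1^2y_2y_4-y_1y_2^2y_4+y_1y_2y_3y_4-y_2y_3^2y_4+y_1y_2y_4^2+y_3^2y_4^2=0$. *)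

theory Defs
  imports "HOL-Analysis.Analysis"
begin

text \<open>Ground set of M_7: labels 1..7 are the elements 1..7, labels 8..14 are 1'..7' (i' = 7+i).\<close>
definition E7 :: "nat set" where
  "E7 = {1..14}"

definition nonbasis7 :: "nat set \<Rightarrow> bool" where
  "nonbasis7 T \<longleftrightarrow> (\<exists>a b c. a \<in> {1..7} \<and> b \<in> {1..7} \<and> c \<in> {1..7} \<and> a \<noteq> b \<and>
       (a + b) mod 7 = (2 * c) mod 7 \<and> T = {a, b, 7 + c})"

definition basis7 :: "nat set \<Rightarrow> bool" where
  "basis7 B \<longleftrightarrow> B \<subseteq> E7 \<and> card B = 3 \<and> \<not> nonbasis7 B"

definition Aut7 :: "(nat \<Rightarrow> nat) set" where
  "Aut7 = {\<sigma>. bij_betw \<sigma> E7 E7 \<and> (\<forall>B. basis7 B \<longrightarrow> basis7 (\<sigma> ` B))}"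

text \<open>A line of P^2 over C is given by a nonzero coordinate vector in C^3 (up to scaling).\<close>
definition same_line :: "complex^3 \<Rightarrow> complex^3 \<Rightarrow> bool" where
  "same_line u v \<longleftrightarrow> (\<exists>c. c \<noteq> 0 \<and> u = c *s v)"

definition concurrent :: "complex^3 \<Rightarrow> complex^3 \<Rightarrow> complex^3 \<Rightarrow> bool" where
  "concurrent u v w \<longleftrightarrow> det (vector [u, v, w] :: complex^3^3) = 0"

definition realization7 :: "(nat \<Rightarrow> complex^3) \<Rightarrow> bool" where
  "realization7 m \<longleftrightarrow>
     (\<forall>e\<in>E7. m e \<noteq> 0) \<and>
     (\<forall>e\<in>E7. \<forall>f\<in>E7. e \<noteq> f \<longrightarrow> \<not> same_line (m e) (m f)) \<and>
     (\<forall>a\<in>E7. \<forall>b\<in>E7. \<forall>c\<in>E7. a \<noteq> b \<and> a \<noteq> c \<and> b \<noteq> c \<longrightarrow>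
         (concurrent (m a) (m b) (m c) \<longleftrightarrow> nonbasis7 {a, b, c}))"

definition pgl_equiv :: "(nat \<Rightarrow> complex^3) \<Rightarrow> (nat \<Rightarrow> complex^3) \<Rightarrow> bool" where
  "pgl_equiv m m' \<longleftrightarrow> (\<exists>A :: complex^3^3. invertible A \<and> (\<forall>e\<in>E7. same_line (A *v m e) (m' e)))"

definition relabel :: "(nat \<Rightarrow> nat) \<Rightarrow> (nat \<Rightarrow> complex^3) \<Rightarrow> (nat \<Rightarrow> complex^3)" where
  "relabel \<sigma> m = m \<circ> inv_into E7 \<sigma>"

end

theory Submission
  imports Defs
begin

(* A single realization suffices. If sigma fixes the point of R_7 given by line7 below, a matrix A
   maps each line line7 e to a multiple of line7 (sigma e). So sigma preserves concurrency, i.e. the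
   non-bases, and hence commutes with third, the map completing two elements to the non-basis
   through them. As E7 is generated from 1, 2, 3 under third, sigma is determined by sigma 1,
   sigma 2, sigma 3; an exhaustive search over these shows that among the maps so obtained only the
   identity preserves a certain cross ratio, which A forces sigma to preserve. *)

section \<open>Determinants and cross ratios of lines\<close>

definition det3 :: "'a::comm_ring_1^3 \<Rightarrow> 'a^3 \<Rightarrow> 'a^3 \<Rightarrow> 'a" where
  "det3 u v w = det (vector [u, v, w] :: 'a^3^3)"

lemma det3_expand:
  "det3 u v w = u$1 * (v$2 * w$3 - v$3 * w$2) - u$2 * (v$1 * w$3 - v$3 * w$1)
     + u$3 * (v$1 * w$2 - v$2 * w$1)"
  by (simp add: det3_def det_3 algebra_simps)

lemma concurrent_iff_det3: "concurrent u v w \<longleftrightarrow> det3 u v w = 0"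
  by (simp add: concurrent_def det3_def)

lemma det3_matrix_vector_mult: "det3 (A *v u) (A *v v) (A *v w) = det A * det3 u v w"
  by (simp add: det3_expand det_3 matrix_vector_mult_def sum_3 algebra_simps)

lemma det3_scale: "det3 (a *s u) (b *s v) (c *s w) = a * b * c * det3 u v w"
  by (simp add: det3_expand algebra_simps)

lemma det3_projective:
  assumes "A *v u = a *s u'" "A *v v = b *s v'" "A *v w = c *s w'"
  shows "det A * det3 u v w = a * b * c * det3 u' v' w'"
  by (metis assms det3_matrix_vector_mult det3_scale)

lemma det3_nonzero_imp_independent:
  assumes "det3 u v w \<noteq> 0"
  shows "u \<noteq> 0" "\<not> same_line u v"
proof -
  show "u \<noteq> 0" using assms by (auto simp: det3_expand)
  show "\<not> same_line u v"
  proof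
    assume "same_line u v"
    then obtain c where "u = c *s v" unfolding same_line_def by blast
    then show False using assms by (simp add: det3_expand algebra_simps)
  qed
qed

lemma det3_eq_0_projective:
  fixes A :: "'a::field^3^3"
  assumes "det A \<noteq> 0" "a \<noteq> 0" "b \<noteq> 0" "c \<noteq> 0"
    and "A *v u = a *s u'" "A *v v = b *s v'" "A *v w = c *s w'"
  shows "det3 u v w = 0 \<longleftrightarrow> det3 u' v' w' = 0"
  using det3_projective[OF assms(5-7)] assms(1-4) by auto

text \<open>The cross ratio of the four points in which the lines p, q, r, s meet the line l, as a point of
  the projective line in homogeneous coordinates.\<close>

definition cross_ratio :: "'a::comm_ring_1^3 \<Rightarrow> 'a^3 \<Rightarrow> 'a^3 \<Rightarrow> 'a^3 \<Rightarrow> 'a^3 \<Rightarrow> 'a \<times> 'a" where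
  "cross_ratio l p q r s = (det3 l p r * det3 l q s, det3 l p s * det3 l q r)"

definition same_ratio :: "'a::comm_ring_1 \<times> 'a \<Rightarrow> 'a \<times> 'a \<Rightarrow> bool" where
  "same_ratio x y \<longleftrightarrow> fst x * snd y = fst y * snd x"

lemma cross_ratio_projective:
  fixes A :: "'a::field^3^3"
  assumes "det A \<noteq> 0"
    and "A *v l = k *s l'" "A *v p = kp *s p'" "A *v q = kq *s q'" "A *v r = kr *s r'" "A *v s = ks *s s'"
  shows "same_ratio (cross_ratio l p q r s) (cross_ratio l' p' q' r' s')"
proof -
  let ?d = "det A"
  have pr: "?d * det3 l p r = k * kp * kr * det3 l' p' r'"
    and qs: "?d * det3 l q s = k * kq * ks * det3 l' q' s'"
    and ps: "?d * det3 l p s = k * kp * ks * det3 l' p' s'"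
    and qr: "?d * det3 l q r = k * kq * kr * det3 l' q' r'"
    using assms(2-6) by (auto intro: det3_projective)
  have "(?d * ?d) * (det3 l p r * det3 l q s * (det3 l' p' s' * det3 l' q' r'))
      = (?d * det3 l p r) * (?d * det3 l q s) * det3 l' p' s' * det3 l' q' r'"
    by (simp add: algebra_simps)
  also have "\<dots> = det3 l' p' r' * det3 l' q' s' * (?d * det3 l p s) * (?d * det3 l q r)"
    unfolding pr qs ps qr by (simp add: algebra_simps)
  also have "\<dots> = (?d * ?d) * (det3 l' p' r' * det3 l' q' s' * (det3 l p s * det3 l q r))"
    by (simp add: algebra_simps)
  finally show ?thesis
    using assms(1) by (simp add: same_ratio_def cross_ratio_def)
qed

section \<open>The non-bases of M_7\<close>

lemma E7_eq: "E7 = {1, 2, 3, 4, 5, 6, 7, 8, 9, 10, 11, 12, 13, 14}"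
  unfolding E7_def by (rule set_eqI) (simp, presburger)

lemma ball_E7_iff:
  "(\<forall>p\<in>E7. P p) \<longleftrightarrow>
     P 1 \<and> P 2 \<and> P 3 \<and> P 4 \<and> P 5 \<and> P 6 \<and> P 7 \<and> P 8 \<and> P 9 \<and> P 10 \<and> P 11 \<and> P 12 \<and> P 13 \<and> P 14"
  by (simp only: E7_eq ball_simps simp_thms)

text \<open>Used as a congruence rule in the exhaustive checks below, so that the simplifier never evaluates
  the conclusion of a case whose guard is false.\<close>

lemma imp_weak_cong: "P = P' \<Longrightarrow> (P \<longrightarrow> Q) = (P' \<longrightarrow> Q)"
  by simp

definition residue7 :: "nat \<Rightarrow> nat" where
  "residue7 x = (if x mod 7 = 0 then 7 else x mod 7)"

text \<open>Any two elements of E7 lie in at most one non-basis; third p q is its remaining element, and 0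
  (which is not in E7) if there is none. For a, b in 1..7 the third element is c' with
  2c = a + b, i.e. c = 4(a + b) mod 7; for a and c' it is b = 2c - a, unless that equals a.\<close>

definition third :: "nat \<Rightarrow> nat \<Rightarrow> nat" where
  "third p q =
     (if p \<le> 7 \<and> q \<le> 7 then (if p \<noteq> q then 7 + residue7 (4 * (p + q)) else 0)
      else if p \<le> 7 then (let b = residue7 (2 * (q - 7) + 7 - p) in if b \<noteq> p then b else 0)
      else if q \<le> 7 then (let b = residue7 (2 * (p - 7) + 7 - q) in if b \<noteq> q then b else 0)
      else 0)"

lemma third_commute: "third p q = third q p"
  by (simp add: third_def add.commute)

text \<open>The value table of third, two lines per non-basis, with the label 1 in its simp normal form
  Suc 0. The exhaustive checks below depend on evaluating third by rewriting with it, which is much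
  faster than unfolding the definition.\<close>

lemma third_nonbasis [simp]:
  "third (Suc 0) 2 = 12" "third (Suc 0) 12 = 2" "third 2 12 = Suc 0"
  "third 2 (Suc 0) = 12" "third 12 (Suc 0) = 2" "third 12 2 = Suc 0"
  "third (Suc 0) 3 = 9" "third (Suc 0) 9 = 3" "third 3 9 = Suc 0"
  "third 3 (Suc 0) = 9" "third 9 (Suc 0) = 3" "third 9 3 = Suc 0"
  "third (Suc 0) 4 = 13" "third (Suc 0) 13 = 4" "third 4 13 = Suc 0"
  "third 4 (Suc 0) = 13" "third 13 (Suc 0) = 4" "third 13 4 = Suc 0"
  "third (Suc 0) 5 = 10" "third (Suc 0) 10 = 5" "third 5 10 = Suc 0"
  "third 5 (Suc 0) = 10" "third 10 (Suc 0) = 5" "third 10 5 = Suc 0"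
  "third (Suc 0) 6 = 14" "third (Suc 0) 14 = 6" "third 6 14 = Suc 0"
  "third 6 (Suc 0) = 14" "third 14 (Suc 0) = 6" "third 14 6 = Suc 0"
  "third (Suc 0) 7 = 11" "third (Suc 0) 11 = 7" "third 7 11 = Suc 0"
  "third 7 (Suc 0) = 11" "third 11 (Suc 0) = 7" "third 11 7 = Suc 0"
  "third 2 3 = 13" "third 2 13 = 3" "third 3 13 = 2"
  "third 3 2 = 13" "third 13 2 = 3" "third 13 3 = 2"
  "third 2 4 = 10" "third 2 10 = 4" "third 4 10 = 2"
  "third 4 2 = 10" "third 10 2 = 4" "third 10 4 = 2"
  "third 2 5 = 14" "third 2 14 = 5" "third 5 14 = 2"
  "third 5 2 = 14" "third 14 2 = 5" "third 14 5 = 2"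
  "third 2 6 = 11" "third 2 11 = 6" "third 6 11 = 2"
  "third 6 2 = 11" "third 11 2 = 6" "third 11 6 = 2"
  "third 2 7 = 8" "third 2 8 = 7" "third 7 8 = 2"
  "third 7 2 = 8" "third 8 2 = 7" "third 8 7 = 2"
  "third 3 4 = 14" "third 3 14 = 4" "third 4 14 = 3"
  "third 4 3 = 14" "third 14 3 = 4" "third 14 4 = 3"
  "third 3 5 = 11" "third 3 11 = 5" "third 5 11 = 3"
  "third 5 3 = 11" "third 11 3 = 5" "third 11 5 = 3"
  "third 3 6 = 8" "third 3 8 = 6" "third 6 8 = 3"
  "third 6 3 = 8" "third 8 3 = 6" "third 8 6 = 3"
  "third 3 7 = 12" "third 3 12 = 7" "third 7 12 = 3"
  "third 7 3 = 12" "third 12 3 = 7" "third 12 7 = 3"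
  "third 4 5 = 8" "third 4 8 = 5" "third 5 8 = 4"
  "third 5 4 = 8" "third 8 4 = 5" "third 8 5 = 4"
  "third 4 6 = 12" "third 4 12 = 6" "third 6 12 = 4"
  "third 6 4 = 12" "third 12 4 = 6" "third 12 6 = 4"
  "third 4 7 = 9" "third 4 9 = 7" "third 7 9 = 4"
  "third 7 4 = 9" "third 9 4 = 7" "third 9 7 = 4"
  "third 5 6 = 9" "third 5 9 = 6" "third 6 9 = 5"
  "third 6 5 = 9" "third 9 5 = 6" "third 9 6 = 5"
  "third 5 7 = 13" "third 5 13 = 7" "third 7 13 = 5"
  "third 7 5 = 13" "third 13 5 = 7" "third 13 7 = 5"
  "third 6 7 = 10" "third 6 10 = 7" "third 7 10 = 6"
  "third 7 6 = 10" "third 10 6 = 7" "third 10 7 = 6"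
  by (simp_all add: third_def residue7_def)

lemma third_eq_0 [simp]:
  "third p p = 0" "7 < p \<Longrightarrow> 7 < q \<Longrightarrow> third p q = 0"
  "third (Suc 0) 8 = 0" "third 8 (Suc 0) = 0" "third 2 9 = 0" "third 9 2 = 0" "third 3 10 = 0" "third 10 3 = 0" "third 4 11 = 0" "third 11 4 = 0"
  "third 5 12 = 0" "third 12 5 = 0" "third 6 13 = 0" "third 13 6 = 0" "third 7 14 = 0" "third 14 7 = 0"
  by (simp_all add: third_def residue7_def)

lemma third_third: "p \<in> E7 \<Longrightarrow> q \<in> E7 \<Longrightarrow> third p q \<noteq> 0 \<Longrightarrow> third p (third p q) = q"
proof -
  have "\<forall>p\<in>E7. \<forall>q\<in>E7. third p q \<noteq> 0 \<longrightarrow> third p (third p q) = q"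
    unfolding ball_E7_iff by simp
  then show "p \<in> E7 \<Longrightarrow> q \<in> E7 \<Longrightarrow> third p q \<noteq> 0 \<Longrightarrow> third p (third p q) = q" by blast
qed

lemma third_mem: "p \<in> E7 \<Longrightarrow> q \<in> E7 \<Longrightarrow> third p q \<noteq> 0 \<Longrightarrow> third p q \<in> E7 - {p, q}"
proof -
  have "\<forall>p\<in>E7. \<forall>q\<in>E7. third p q \<noteq> 0 \<longrightarrow> third p q \<in> E7 - {p, q}"
    unfolding ball_E7_iff by (simp add: E7_def)
  then show "p \<in> E7 \<Longrightarrow> q \<in> E7 \<Longrightarrow> third p q \<noteq> 0 \<Longrightarrow> third p q \<in> E7 - {p, q}" by blast
qed

lemma third_eq_swap:
  assumes "p \<in> E7" "q \<in> E7" "z \<in> E7"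
  shows "third p q = z \<longleftrightarrow> third p z = q"
proof -
  have "0 \<notin> E7" by (simp add: E7_def)
  then show ?thesis using assms third_third by metis
qed

lemma distinct_triple_sorted_wlog:
  fixes P :: "'a::linorder \<Rightarrow> 'a \<Rightarrow> 'a \<Rightarrow> bool"
  assumes "\<And>p q z. P p q z \<Longrightarrow> P q p z" "\<And>p q z. P p q z \<Longrightarrow> P p z q"
    and "\<And>p q z. p < q \<Longrightarrow> q < z \<Longrightarrow> P p q z"
    and "p \<noteq> q" "p \<noteq> z" "q \<noteq> z"
  shows "P p q z"
  using assms by (metis linorder_neqE)

lemma third_iff_of_sorted:
  assumes sym: "\<And>p q z. P p q z \<longleftrightarrow> P q p z" "\<And>p q z. P p q z \<longleftrightarrow> P p z q"
    and sorted: "\<And>p q z. p \<in> E7 \<Longrightarrow> q \<in> E7 \<Longrightarrow> z \<in> E7 \<Longrightarrow> p < q \<Longrightarrow> q < z \<Longrightarrow>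
      P p q z \<longleftrightarrow> third p q = z"
    and "p \<in> E7" "q \<in> E7" "z \<in> E7" "p \<noteq> q" "p \<noteq> z" "q \<noteq> z"
  shows "P p q z \<longleftrightarrow> third p q = z"
proof -
  let ?Q = "\<lambda>p q z. p \<in> E7 \<longrightarrow> q \<in> E7 \<longrightarrow> z \<in> E7 \<longrightarrow> (P p q z \<longleftrightarrow> third p q = z)"
  have "?Q p q z"
  proof (rule distinct_triple_sorted_wlog[where P = ?Q])
    show "?Q q p z" if "?Q p q z" for p q z
      using that sym(1) third_commute by metis
    show "?Q p z q" if "?Q p q z" for p q z
      using that sym(2) third_eq_swap by metis
  qed (use sorted assms in auto)
  then show ?thesis using assms by blast
qed

lemma nonbasis7_sorted_iff:
  assumes "p \<in> E7" "q \<in> E7" "z \<in> E7" "p < q" "q < z"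
  shows "nonbasis7 {p, q, z} \<longleftrightarrow> q \<le> 7 \<and> 8 \<le> z \<and> (p + q) mod 7 = (2 * (z - 7)) mod 7"
proof
  assume "nonbasis7 {p, q, z}"
  then obtain a b c where abc: "a \<in> {1..7}" "b \<in> {1..7}" "c \<in> {1..7}" "a \<noteq> b"
      "(a + b) mod 7 = (2 * c) mod 7" and T: "{p, q, z} = {a, b, 7 + c}"
    unfolding nonbasis7_def by blast
  have mem: "p \<in> {a, b, 7 + c}" "q \<in> {a, b, 7 + c}" "z \<in> {a, b, 7 + c}" "7 + c \<in> {p, q, z}"
    using T by blast+
  then have "z = 7 + c" using abc assms(4,5) by auto
  moreover have "p + q = a + b"
    using mem T abc assms(4,5) \<open>z = 7 + c\<close> by (auto simp: doubleton_eq_iff)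
  ultimately show "q \<le> 7 \<and> 8 \<le> z \<and> (p + q) mod 7 = (2 * (z - 7)) mod 7"
    using mem abc assms(4,5) by auto
next
  assume "q \<le> 7 \<and> 8 \<le> z \<and> (p + q) mod 7 = (2 * (z - 7)) mod 7"
  then show "nonbasis7 {p, q, z}"
    unfolding nonbasis7_def using assms
    by (intro exI[of _ p] exI[of _ q] exI[of _ "z - 7"]) (auto simp: E7_def)
qed

lemma nonbasis7_iff_third:
  assumes "a \<in> E7" "b \<in> E7" "c \<in> E7" "a \<noteq> b" "a \<noteq> c" "b \<noteq> c"
  shows "nonbasis7 {a, b, c} \<longleftrightarrow> third a b = c"
proof (rule third_iff_of_sorted[where P = "\<lambda>a b c. nonbasis7 {a, b, c}"])
  have "\<forall>p\<in>E7. \<forall>q\<in>E7. \<forall>z\<in>E7. p < q \<longrightarrow> q < z \<longrightarrow>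
      (q \<le> 7 \<and> 8 \<le> z \<and> (p + q) mod 7 = (2 * (z - 7)) mod 7 \<longleftrightarrow> third p q = z)"
    unfolding ball_E7_iff by (simp cong: imp_weak_cong)
  then show "nonbasis7 {p, q, z} \<longleftrightarrow> third p q = z"
    if "p \<in> E7" "q \<in> E7" "z \<in> E7" "p < q" "q < z" for p q z
    using that nonbasis7_sorted_iff by blast
qed (use assms in \<open>auto simp: insert_commute\<close>)

section \<open>An explicit realization\<close>

text \<open>Lines 1, 2, 3 are the coordinate lines. Integer coordinates turn every concurrency and
  cross-ratio test below into integer arithmetic.\<close>

definition int_line7 :: "nat \<Rightarrow> int^3" where
  "int_line7 e = vector ([[1, 0, 0], [0, 1, 0], [0, 0, 1], [349, 595, -568], [-2008, 2443, 5440],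
     [2304, 1757, -2792], [-127, 252, 251], [-292608, -223139, 578304], [-71, 0, 127],
     [-237320, 173453, 386240], [-72288, 87948, 87599], [-127, 252, 0], [0, 595, -568],
     [-87599, -149345, 237320]] ! (e - 1))"

definition line7 :: "nat \<Rightarrow> complex^3" where
  "line7 e = (\<chi> i. of_int (int_line7 e $ i))"

lemma det3_line7:
  "det3 (line7 a) (line7 b) (line7 c) = of_int (det3 (int_line7 a) (int_line7 b) (int_line7 c))"
  by (simp add: line7_def det3_expand)

lemma det3_int_line7_eq_0_iff:
  assumes "a \<in> E7" "b \<in> E7" "c \<in> E7" "a \<noteq> b" "a \<noteq> c" "b \<noteq> c"
  shows "det3 (int_line7 a) (int_line7 b) (int_line7 c) = 0 \<longleftrightarrow> third a b = c"
proof (rule third_iff_of_sorted[where P = "\<lambda>a b c. det3 (int_line7 a) (int_line7 b) (int_line7 c) = 0"])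
  have "\<forall>p\<in>E7. \<forall>q\<in>E7. \<forall>z\<in>E7. p < q \<longrightarrow> q < z \<longrightarrow>
      (det3 (int_line7 p) (int_line7 q) (int_line7 z) = 0 \<longleftrightarrow> third p q = z)"
    unfolding ball_E7_iff
    by (simp add: det3_expand int_line7_def cong: imp_weak_cong)
  then show "det3 (int_line7 p) (int_line7 q) (int_line7 z) = 0 \<longleftrightarrow> third p q = z"
    if "p \<in> E7" "q \<in> E7" "z \<in> E7" "p < q" "q < z" for p q z
    using that by blast
qed (use assms in \<open>auto simp: det3_expand algebra_simps\<close>)

lemma concurrent_line7_iff_third:
  assumes "a \<in> E7" "b \<in> E7" "c \<in> E7" "a \<noteq> b" "a \<noteq> c" "b \<noteq> c"
  shows "concurrent (line7 a) (line7 b) (line7 c) \<longleftrightarrow> third a b = c"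
  using det3_int_line7_eq_0_iff[OF assms] by (simp add: concurrent_iff_det3 det3_line7)

lemma exists_not_concurrent_line7:
  assumes "e \<in> E7" "f \<in> E7" "e \<noteq> f"
  obtains g where "\<not> concurrent (line7 e) (line7 f) (line7 g)"
proof -
  have "\<not> E7 \<subseteq> {e, f, third e f}"
  proof
    assume "E7 \<subseteq> {e, f, third e f}"
    then have "card E7 \<le> card {e, f, third e f}" by (simp add: card_mono)
    also have "\<dots> \<le> 3" by (simp add: card_insert_if)
    finally show False by (simp add: E7_def)
  qed
  then obtain g where "g \<in> E7" "g \<noteq> e" "g \<noteq> f" "third e f \<noteq> g" by blast
  then show ?thesis using that concurrent_line7_iff_third assms by blast
qed

lemma realization7_line7: "realization7 line7"
  unfolding realization7_def
proof (intro conjI ballI impI)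
  fix e assume e: "e \<in> E7"
  define f where "f = (if e = 1 then 2 else 1 :: nat)"
  have "f \<in> E7" "e \<noteq> f" by (auto simp: f_def E7_def)
  then obtain g where "\<not> concurrent (line7 e) (line7 f) (line7 g)"
    using exists_not_concurrent_line7 e by blast
  then show "line7 e \<noteq> 0"
    using det3_nonzero_imp_independent by (auto simp: concurrent_iff_det3)
next
  fix e f assume "e \<in> E7" "f \<in> E7" "e \<noteq> f"
  then obtain g where "\<not> concurrent (line7 e) (line7 f) (line7 g)"
    using exists_not_concurrent_line7 by blast
  then show "\<not> same_line (line7 e) (line7 f)"
    using det3_nonzero_imp_independent by (auto simp: concurrent_iff_det3)
next
  fix a b c assume "a \<in> E7" "b \<in> E7" "c \<in> E7" "a \<noteq> b \<and> a \<noteq> c \<and> b \<noteq> c"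
  then show "concurrent (line7 a) (line7 b) (line7 c) \<longleftrightarrow> nonbasis7 {a, b, c}"
    using concurrent_line7_iff_third nonbasis7_iff_third by auto
qed

section \<open>Relabellings induced by projective maps\<close>

lemma relabel_pgl_equivE:
  assumes "bij_betw \<sigma> E7 E7" "pgl_equiv (relabel \<sigma> m) m'"
  obtains A :: "complex^3^3" and k where "det A \<noteq> 0"
    "\<And>e. e \<in> E7 \<Longrightarrow> k e \<noteq> 0" "\<And>e. e \<in> E7 \<Longrightarrow> A *v m e = k e *s m' (\<sigma> e)"
proof -
  obtain A :: "complex^3^3" where A: "invertible A"
    and same: "\<forall>e\<in>E7. same_line (A *v relabel \<sigma> m e) (m' e)"
    using assms(2) unfolding pgl_equiv_def by blast
  have "\<exists>c. c \<noteq> 0 \<and> A *v m f = c *s m' (\<sigma> f)" if f: "f \<in> E7" for f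
  proof -
    have "relabel \<sigma> m (\<sigma> f) = m f"
      using f assms(1) by (simp add: relabel_def bij_betw_def)
    then show ?thesis
      using same f assms(1) bij_betwE unfolding same_line_def by metis
  qed
  then obtain k where "\<forall>f\<in>E7. k f \<noteq> 0 \<and> A *v m f = k f *s m' (\<sigma> f)"
    by metis
  then show ?thesis using that A invertible_det_nz by blast
qed

lemma nonbasis7_image_if_projective:
  fixes A :: "complex^3^3"
  assumes m: "realization7 m" and \<sigma>: "\<sigma> ` E7 \<subseteq> E7" "inj_on \<sigma> E7"
    and A: "det A \<noteq> 0" "\<And>e. e \<in> E7 \<Longrightarrow> k e \<noteq> 0" "\<And>e. e \<in> E7 \<Longrightarrow> A *v m e = k e *s m (\<sigma> e)"
    and abc: "a \<in> E7" "b \<in> E7" "c \<in> E7" "distinct [a, b, c]" "nonbasis7 {a, b, c}"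
  shows "nonbasis7 {\<sigma> a, \<sigma> b, \<sigma> c}"
proof -
  have \<sigma>abc: "\<sigma> a \<in> E7" "\<sigma> b \<in> E7" "\<sigma> c \<in> E7" "distinct [\<sigma> a, \<sigma> b, \<sigma> c]"
    using abc \<sigma> by (auto dest: inj_onD)
  have "concurrent (m a) (m b) (m c)"
    using m abc unfolding realization7_def by auto
  then have "concurrent (m (\<sigma> a)) (m (\<sigma> b)) (m (\<sigma> c))"
    using det3_eq_0_projective[OF A(1) A(2) A(2) A(2) A(3) A(3) A(3)] abc
    by (simp add: concurrent_iff_det3)
  then show ?thesis
    using m \<sigma>abc unfolding realization7_def by auto
qed

definition commutes_with_third :: "(nat \<Rightarrow> nat) \<Rightarrow> bool" where
  "commutes_with_third \<sigma> \<longleftrightarrow>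
     (\<forall>a\<in>E7. \<forall>b\<in>E7. a \<noteq> b \<longrightarrow> third a b \<noteq> 0 \<longrightarrow> \<sigma> (third a b) = third (\<sigma> a) (\<sigma> b))"

lemma commutes_with_third_if_nonbasis7_image:
  assumes "\<sigma> ` E7 \<subseteq> E7" "inj_on \<sigma> E7"
    and nonbasis: "\<And>a b c. a \<in> E7 \<Longrightarrow> b \<in> E7 \<Longrightarrow> c \<in> E7 \<Longrightarrow> distinct [a, b, c] \<Longrightarrow>
      nonbasis7 {a, b, c} \<Longrightarrow> nonbasis7 {\<sigma> a, \<sigma> b, \<sigma> c}"
  shows "commutes_with_third \<sigma>"
  unfolding commutes_with_third_def
proof (intro ballI impI)
  fix a b assume ab: "a \<in> E7" "b \<in> E7" "a \<noteq> b" "third a b \<noteq> 0"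
  define c where "c = third a b"
  have c: "c \<in> E7" "c \<noteq> a" "c \<noteq> b" using third_mem ab by (auto simp: c_def)
  have "nonbasis7 {a, b, c}" using nonbasis7_iff_third ab c by (simp add: c_def)
  then have "nonbasis7 {\<sigma> a, \<sigma> b, \<sigma> c}" using nonbasis ab c by auto
  moreover have "\<sigma> a \<in> E7" "\<sigma> b \<in> E7" "\<sigma> c \<in> E7" "distinct [\<sigma> a, \<sigma> b, \<sigma> c]"
    using assms(1,2) ab c by (auto dest: inj_onD)
  ultimately show "\<sigma> (third a b) = third (\<sigma> a) (\<sigma> b)"
    using nonbasis7_iff_third by (simp add: c_def)
qed

definition preserves_cross_ratio :: "(nat \<Rightarrow> nat) \<Rightarrow> nat \<Rightarrow> nat \<Rightarrow> nat \<Rightarrow> nat \<Rightarrow> nat \<Rightarrow> bool" where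
  "preserves_cross_ratio \<sigma> l p q r s \<longleftrightarrow>
     same_ratio (cross_ratio (int_line7 l) (int_line7 p) (int_line7 q) (int_line7 r) (int_line7 s))
       (cross_ratio (int_line7 (\<sigma> l)) (int_line7 (\<sigma> p)) (int_line7 (\<sigma> q)) (int_line7 (\<sigma> r))
          (int_line7 (\<sigma> s)))"

lemma preserves_cross_ratio_if_projective:
  fixes A :: "complex^3^3"
  assumes "det A \<noteq> 0" "\<And>e. e \<in> E7 \<Longrightarrow> A *v line7 e = k e *s line7 (\<sigma> e)"
    and "l \<in> E7" "p \<in> E7" "q \<in> E7" "r \<in> E7" "s \<in> E7"
  shows "preserves_cross_ratio \<sigma> l p q r s"
proof -
  have "same_ratio (cross_ratio (line7 l) (line7 p) (line7 q) (line7 r) (line7 s))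
      (cross_ratio (line7 (\<sigma> l)) (line7 (\<sigma> p)) (line7 (\<sigma> q)) (line7 (\<sigma> r)) (line7 (\<sigma> s)))"
    using assms by (intro cross_ratio_projective) auto
  then show ?thesis
    unfolding preserves_cross_ratio_def same_ratio_def cross_ratio_def det3_line7
    by (simp only: fst_conv snd_conv of_int_mult[symmetric] of_int_eq_iff)
qed

section \<open>Rigidity of the frame 1, 2, 3\<close>

text \<open>Starting from 1, 2, 3, every label is third of two earlier ones: 12 = third 1 2, 9 = third 1 3,
  13 = third 2 3, 7 = third 3 12, 11 = third 1 7, 4 = third 1 13, 10 = third 2 4, 8 = third 2 7,
  6 = third 2 11, 14 = third 3 4, 5 = third 3 11. So a map commuting with third is
  frame_map (\<sigma> 1) (\<sigma> 2) (\<sigma> 3).\<close>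

definition frame_list :: "nat \<Rightarrow> nat \<Rightarrow> nat \<Rightarrow> nat list" where
  "frame_list a b c =
     (let x12 = third a b; x9 = third a c; x13 = third b c; x7 = third c x12; x11 = third a x7;
        x4 = third a x13; x10 = third b x4; x8 = third b x7; x6 = third b x11; x14 = third c x4;
        x5 = third c x11
      in [a, b, c, x4, x5, x6, x7, x8, x9, x10, x11, x12, x13, x14])"

definition frame_map :: "nat \<Rightarrow> nat \<Rightarrow> nat \<Rightarrow> nat \<Rightarrow> nat" where
  "frame_map a b c e = frame_list a b c ! (e - 1)"

lemma map_frame_map: "map (frame_map a b c) [1..<15] = frame_list a b c"
  by (simp add: frame_map_def frame_list_def Let_def upt_rec)

lemma frame_map_1_2_3: "e \<in> E7 \<Longrightarrow> frame_map 1 2 3 e = e"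
proof -
  have "\<forall>e\<in>E7. frame_map 1 2 3 e = e"
    unfolding ball_E7_iff by (simp add: frame_map_def frame_list_def Let_def)
  then show "e \<in> E7 \<Longrightarrow> frame_map 1 2 3 e = e" by blast
qed

lemma eq_frame_map_if_commutes_with_third:
  assumes "commutes_with_third \<sigma>" "e \<in> E7"
  shows "\<sigma> e = frame_map (\<sigma> 1) (\<sigma> 2) (\<sigma> 3) e"
proof -
  have step: "\<sigma> (third a b) = third (\<sigma> a) (\<sigma> b)" if "a \<in> E7" "b \<in> E7" "a \<noteq> b" "third a b \<noteq> 0" for a b
    using assms(1) that unfolding commutes_with_third_def by blast
  have "\<sigma> 12 = third (\<sigma> 1) (\<sigma> 2)" "\<sigma> 9 = third (\<sigma> 1) (\<sigma> 3)" "\<sigma> 13 = third (\<sigma> 2) (\<sigma> 3)"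
    "\<sigma> 7 = third (\<sigma> 3) (\<sigma> 12)" "\<sigma> 11 = third (\<sigma> 1) (\<sigma> 7)" "\<sigma> 4 = third (\<sigma> 1) (\<sigma> 13)"
    "\<sigma> 10 = third (\<sigma> 2) (\<sigma> 4)" "\<sigma> 8 = third (\<sigma> 2) (\<sigma> 7)" "\<sigma> 6 = third (\<sigma> 2) (\<sigma> 11)"
    "\<sigma> 14 = third (\<sigma> 3) (\<sigma> 4)" "\<sigma> 5 = third (\<sigma> 3) (\<sigma> 11)"
    using step[of 1 2] step[of 1 3] step[of 2 3] step[of 3 12] step[of 1 7] step[of 1 13]
      step[of 2 4] step[of 2 7] step[of 2 11] step[of 3 4] step[of 3 11]
    by (simp_all add: E7_def)
  then show ?thesis
    using assms(2) unfolding E7_eq frame_map_def frame_list_def Let_def by auto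
qed

text \<open>Exactly 42 triples pass the first two tests, those giving the automorphisms of M_7; among
  them only the identity preserves the cross ratio of the lines 1, 2, 12, 13 on the line 9.\<close>

lemma frame_search:
  "\<forall>a\<in>E7. \<forall>b\<in>E7. \<forall>c\<in>E7. 0 \<notin> set (frame_list a b c) \<longrightarrow> distinct (frame_list a b c) \<longrightarrow>
     preserves_cross_ratio (frame_map a b c) 9 1 2 12 13 \<longrightarrow> a = 1 \<and> b = 2 \<and> c = 3"
  unfolding ball_E7_iff
  by (simp add: frame_list_def frame_map_def Let_def preserves_cross_ratio_def
      cross_ratio_def same_ratio_def det3_expand int_line7_def cong: imp_weak_cong let_weak_cong)

lemma frame_rigidity:
  assumes "commutes_with_third \<sigma>" "\<sigma> ` E7 \<subseteq> E7" "inj_on \<sigma> E7"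
    and "preserves_cross_ratio \<sigma> 9 1 2 12 13"
  shows "\<forall>e\<in>E7. \<sigma> e = e"
proof -
  let ?f = "frame_map (\<sigma> 1) (\<sigma> 2) (\<sigma> 3)"
  have f: "\<sigma> e = ?f e" if "e \<in> E7" for e
    using eq_frame_map_if_commutes_with_third assms(1) that by blast
  have upt: "set [1..<15] = E7" by (auto simp: E7_def)
  have list: "frame_list (\<sigma> 1) (\<sigma> 2) (\<sigma> 3) = map \<sigma> [1..<15]"
    unfolding map_frame_map[symmetric] using f upt by (auto intro: map_cong)
  have "{1, 2, 3} \<subseteq> E7" by (simp add: E7_def)
  then have "\<sigma> 1 \<in> E7" "\<sigma> 2 \<in> E7" "\<sigma> 3 \<in> E7" using assms(2) by auto
  moreover have "0 \<notin> set (frame_list (\<sigma> 1) (\<sigma> 2) (\<sigma> 3))"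
    using assms(2) upt unfolding list by (auto simp: E7_def)
  moreover have "distinct (frame_list (\<sigma> 1) (\<sigma> 2) (\<sigma> 3))"
    using assms(3) upt unfolding list by (simp add: distinct_map)
  moreover have "preserves_cross_ratio ?f 9 1 2 12 13"
    using assms(4) f[symmetric, of 9] f[symmetric, of 1] f[symmetric, of 2] f[symmetric, of 12]
      f[symmetric, of 13]
    unfolding preserves_cross_ratio_def by (simp add: E7_def)
  ultimately have "\<sigma> 1 = 1 \<and> \<sigma> 2 = 2 \<and> \<sigma> 3 = 3"
    using frame_search by blast
  then show ?thesis
    using f frame_map_1_2_3 by simp
qed

theorem proposition3p4:
  assumes "\<sigma> \<in> Aut7"
    and "\<forall>m. realization7 m \<longrightarrow> pgl_equiv (relabel \<sigma> m) m"
  shows "\<forall>e\<in>E7. \<sigma> e = e"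
proof -
  have bij: "bij_betw \<sigma> E7 E7" using assms(1) by (simp add: Aut7_def)
  then have \<sigma>: "\<sigma> ` E7 \<subseteq> E7" "inj_on \<sigma> E7" by (auto simp: bij_betw_def)
  obtain A :: "complex^3^3" and k where A: "det A \<noteq> 0" "\<And>e. e \<in> E7 \<Longrightarrow> k e \<noteq> 0"
    "\<And>e. e \<in> E7 \<Longrightarrow> A *v line7 e = k e *s line7 (\<sigma> e)"
    using relabel_pgl_equivE[OF bij] assms(2) realization7_line7 by metis
  have "commutes_with_third \<sigma>"
    using \<sigma> nonbasis7_image_if_projective[OF realization7_line7 \<sigma> A]
    by (rule commutes_with_third_if_nonbasis7_image)
  moreover have "preserves_cross_ratio \<sigma> 9 1 2 12 13"
    using A by (intro preserves_cross_ratio_if_projective) (auto simp: E7_def)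
  ultimately show ?thesis
    using \<sigma> frame_rigidity by blast
qed

end
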